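(* Let $\tau,\delta\in W$ be defined recursively by $\tau=(1,\tau)\sigma$ and $\delta=(\delta,\delta)\sigma$. Then $H=\langle\tau,\delta\rangle$ is infinite dihedral, and $N_W(H)=H$.
   Context: $W$ is the isometry group of the binary rooted tree $\{0,1\}^*$. Elements are written $(g_0,g_1)\pi$ with $\pi\in\mathrm{Sym}(\{0,1\})$, meaning $(xw)^{(g_0,g_1)\pi}=x^\pi w^{g_x}$; $\sigma$ is the nontrivial permutation of $\{0,1\}$ acting rigidly at the root. *)

theory Defs
  imports "HOL-Algebra.Algebra"
begin

text \<open>Vertices of the binary rooted tree are words over {0,1}; 0 is False, 1 is True.
  Elements of W act on the right: x^(g h) = (x^g)^h, so the product g h is h \<circ> g.\<close>

type_synonym vertex = "bool list"

definition tree_isometries :: "(vertex \<Rightarrow> vertex) set" where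
  "tree_isometries = {g. bij g \<and>
      (\<forall>u v. \<exists>v'. g (u @ v) = g u @ v' \<and> length v' = length v)}"

definition W :: "(vertex \<Rightarrow> vertex) monoid" where
  "W = \<lparr> carrier = tree_isometries, monoid.mult = (\<lambda>g h. h \<circ> g), monoid.one = id \<rparr>"

text \<open>tau = (1, tau) sigma\<close>
fun tau :: "vertex \<Rightarrow> vertex" where
  "tau [] = []"
| "tau (False # w) = True # w"
| "tau (True # w) = False # tau w"

text \<open>delta = (delta, delta) sigma\<close>
fun delta :: "vertex \<Rightarrow> vertex" where
  "delta [] = []"
| "delta (x # w) = (\<not> x) # delta w"

definition Dinf :: "(int \<times> bool) monoid" where
  "Dinf = \<lparr> carrier = UNIV,
            monoid.mult = (\<lambda>(a, s) (b, t). (a + (if s then - b else b), s \<noteq> t)),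
            monoid.one = (0, False) \<rparr>"

end

theory Submission
  imports Defs
begin

text \<open>Read a vertex of length n as a residue modulo 2^n, least significant digit first.
  Then tau is x \<mapsto> x + 1 and delta, which complements every digit, is x \<mapsto> -1 - x,
  so H consists of the maps x \<mapsto> \<plusminus>x + c with c \<in> \<int>, a faithful copy of the
  infinite dihedral group.
  If g normalizes H, then g\<inverse> tau g is a translation (it has infinite order), and
  comparing it with g tau g\<inverse> shows that it is tau or its inverse.  Hence g is 2-adically
  affine, x \<mapsto> z \<plusminus> x with z a 2-adic integer.  Conjugating the reflection delta
  then gives 2z \<in> \<int>, so z \<in> \<int> and g \<in> H.\<close>

fun word_val :: "vertex \<Rightarrow> int" where
  "word_val [] = 0"
| "word_val (x # w) = of_bool x + 2 * word_val w"

fun word_of_int :: "nat \<Rightarrow> int \<Rightarrow> vertex" where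
  "word_of_int 0 k = []"
| "word_of_int (Suc n) k = odd k # word_of_int n (k div 2)"

lemma length_word_of_int [simp]: "length (word_of_int n k) = n"
  by (induction n arbitrary: k) auto

lemma word_val_word_of_int [simp]: "word_val (word_of_int n k) = k mod 2 ^ n"
proof (induction n arbitrary: k)
  case (Suc n)
  have "k mod (2 * 2 ^ n) = of_bool (odd k) + 2 * ((k div 2) mod 2 ^ n)"
    using zmod_zmult2_eq[where a = k and b = 2 and c = "2 ^ n"]
    by (simp add: mod_2_eq_odd mult.commute)
  then show ?case using Suc by simp
qed simp

lemma word_of_int_word_val [simp]: "word_of_int (length w) (word_val w) = w"
  by (induction w) auto

lemma word_of_int_eq_iff: "word_of_int n x = word_of_int n y \<longleftrightarrow> 2 ^ n dvd x - y"
  by (metis word_of_int_word_val length_word_of_int word_val_word_of_int mod_eq_dvd_iff)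

lemma word_val_append: "word_val (u @ v) = word_val u + 2 ^ length u * word_val v"
  by (induction u) (auto simp: algebra_simps)

lemma word_of_int_add: "word_of_int (n + m) k = word_of_int n k @ word_of_int m (k div 2 ^ n)"
  by (induction n arbitrary: k) (simp_all add: zdiv_zmult2_eq)

definition aff :: "int \<Rightarrow> bool \<Rightarrow> vertex \<Rightarrow> vertex" where
  "aff a s w = word_of_int (length w) (if s then -1 - (word_val w + a) else word_val w + a)"

lemma aff_word_of_int:
  "aff a s (word_of_int n k) = word_of_int n (if s then -1 - (k + a) else k + a)"
proof -
  have "2 ^ n dvd k - k mod 2 ^ n" "2 ^ n dvd k mod 2 ^ n - k"
    by (simp_all add: mod_eq_dvd_iff[symmetric])
  then show ?thesis by (cases s) (simp_all add: aff_def word_of_int_eq_iff algebra_simps)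
qed

lemma aff_comp [simp]: "aff b t \<circ> aff a s = aff (a + (if s then - b else b)) (s \<noteq> t)"
proof
  fix w
  have "aff b t (aff a s (word_of_int n k))
      = aff (a + (if s then - b else b)) (s \<noteq> t) (word_of_int n k)" for n k by (cases s; cases t) (simp_all add: aff_word_of_int algebra_simps)
  then show "(aff b t \<circ> aff a s) w = aff (a + (if s then - b else b)) (s \<noteq> t) w"
    by (metis comp_apply word_of_int_word_val)
qed

lemma aff_0_False [simp]: "aff 0 False = id"
  by (simp add: aff_def fun_eq_iff)

lemma tau_eq_aff: "tau = aff 1 False"
proof
  fix w show "tau w = aff 1 False w"
    by (induction w rule: tau.induct) (auto simp: aff_def ac_simps)
qed

lemma delta_eq_aff: "delta = aff 0 True"
proof
  fix w show "delta w = aff 0 True w"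
  proof (induction w)
    case (Cons x w)
    have "(-1 - (of_bool x + 2 * word_val w)) div 2 = -1 - word_val w" by (cases x) simp_all
    with Cons show ?case by (simp add: aff_def)
  qed (simp add: aff_def)
qed

lemma aff_append: "\<exists>v'. aff a s (u @ v) = aff a s u @ v' \<and> length v' = length v"
proof -
  let ?k = "if s then -1 - (word_val (u @ v) + a) else word_val (u @ v) + a"
  have "word_of_int (length u) ?k = aff a s u"
    by (simp add: aff_def word_of_int_eq_iff word_val_append algebra_simps)
  then show ?thesis
    by (simp add: aff_def word_of_int_add del: word_of_int.simps)
qed

lemma pow2_dvd_all_imp_zero:
  fixes c :: int
  assumes "\<And>n. 2 ^ n dvd c"
  shows "c = 0"
proof (rule ccontr)
  assume "c \<noteq> 0"
  then have "\<bar>2 ^ nat \<bar>c\<bar>\<bar> \<le> \<bar>c\<bar>" using dvd_imp_le_int assms by blast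
  moreover have "int (nat \<bar>c\<bar>) < 2 ^ nat \<bar>c\<bar>" by (rule of_nat_less_two_power)
  ultimately show False by simp
qed

lemma aff_eq_id_iff: "aff a s = id \<longleftrightarrow> a = 0 \<and> \<not> s"
proof
  assume id: "aff a s = id"
  show "a = 0 \<and> \<not> s"
  proof (cases s)
    case True
    have "word_of_int 2 (-1 - k - a) = word_of_int 2 k" for k
      using fun_cong[OF id, of "word_of_int 2 k"] True by (simp add: aff_word_of_int diff_diff_eq)
    from this[of 0] this[of 1] have "4 dvd -1 - a" "4 dvd -3 - a"
      by (simp_all only: word_of_int_eq_iff) simp_all
    then show ?thesis by presburger
  next
    case False
    have "word_of_int n a = word_of_int n 0" for n
      using fun_cong[OF id, of "word_of_int n 0"] False by (simp add: aff_word_of_int)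
    then have "2 ^ n dvd a" for n by (simp add: word_of_int_eq_iff mod_eq_0_iff_dvd)
    with False show ?thesis using pow2_dvd_all_imp_zero by blast
  qed
qed simp

lemma aff_inject: "aff a s = aff b t \<longleftrightarrow> a = b \<and> s = t"
proof
  assume "aff a s = aff b t"
  then have "aff (if t then b else - b) t \<circ> aff a s = id"
    by (simp add: aff_eq_id_iff)
  then show "a = b \<and> s = t"
    by (cases s; cases t) (simp_all add: aff_eq_id_iff)
qed simp

lemma bij_tree_isometry: "g \<in> tree_isometries \<Longrightarrow> bij g"
  by (simp add: tree_isometries_def)

lemma length_tree_isometry:
  assumes "g \<in> tree_isometries"
  shows "length (g w) = length w"
proof -
  have bij: "bij g" and prefix: "\<And>u v. \<exists>v'. g (u @ v) = g u @ v' \<and> length v' = length v"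
    using assms by (auto simp: tree_isometries_def)
  obtain y where "g y = []" using bij by (metis bij_pointE)
  with prefix[of "[]" y] have "g [] = []" by auto
  with prefix[of "[]" w] show ?thesis by auto
qed

lemma take_tree_isometry:
  assumes "g \<in> tree_isometries"
  shows "take (length u) (g (u @ v)) = g u"
proof -
  obtain v' where "g (u @ v) = g u @ v'"
    using assms by (auto simp: tree_isometries_def)
  then show ?thesis using length_tree_isometry[OF assms] by simp
qed

lemma tree_isometries_id: "id \<in> tree_isometries"
  by (simp add: tree_isometries_def)

lemma tree_isometries_comp:
  assumes f: "f \<in> tree_isometries" and g: "g \<in> tree_isometries"
  shows "g \<circ> f \<in> tree_isometries"
proof -
  have "\<exists>v'. g (f (u @ v)) = g (f u) @ v' \<and> length v' = length v" for u v
  proof -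
    obtain v1 where "f (u @ v) = f u @ v1" "length v1 = length v"
      using f by (auto simp: tree_isometries_def)
    moreover obtain v2 where "g (f u @ v1) = g (f u) @ v2" "length v2 = length v1"
      using g by (auto simp: tree_isometries_def)
    ultimately show ?thesis by auto
  qed
  with f g show ?thesis by (auto simp: tree_isometries_def intro: bij_comp)
qed

lemma tree_isometries_inv:
  assumes g: "g \<in> tree_isometries"
  shows "inv_into UNIV g \<in> tree_isometries"
proof -
  have bij: "bij g" using g by (rule bij_tree_isometry)
  have "\<exists>v'. inv_into UNIV g (u @ v) = inv_into UNIV g u @ v' \<and> length v' = length v" for u v
  proof -
    define x where "x = inv_into UNIV g (u @ v)"
    have gx: "g x = u @ v" unfolding x_def using bij by (simp add: bij_is_surj surj_f_inv_f)
    then have len: "length x = length u + length v" using length_tree_isometry[OF g, of x] by simp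
    have "g (take (length u) x) = u"
      using take_tree_isometry[OF g, of "take (length u) x" "drop (length u) x"] gx len by simp
    then have "take (length u) x = inv_into UNIV g u" using bij by (metis bij_is_inj inv_f_f)
    then have "x = inv_into UNIV g u @ drop (length u) x" by (metis append_take_drop_id)
    with len show ?thesis unfolding x_def by (metis add_diff_cancel_left' length_drop)
  qed
  with bij show ?thesis by (simp add: tree_isometries_def bij_imp_bij_inv)
qed

lemma carrier_W [simp]: "carrier W = tree_isometries"
  and mult_W [simp]: "g \<otimes>\<^bsub>W\<^esub> h = h \<circ> g"
  and one_W [simp]: "\<one>\<^bsub>W\<^esub> = id"
  by (simp_all add: W_def)

lemma group_W: "group W"
proof (rule groupI)
  fix g assume g: "g \<in> carrier W"
  then have "surj g" by (simp add: bij_tree_isometry bij_is_surj)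
  with g have "inv_into UNIV g \<in> carrier W" and "inv_into UNIV g \<otimes>\<^bsub>W\<^esub> g = \<one>\<^bsub>W\<^esub>"
    by (simp_all add: tree_isometries_inv surj_iff)
  then show "\<exists>h\<in>carrier W. h \<otimes>\<^bsub>W\<^esub> g = \<one>\<^bsub>W\<^esub>" by blast
qed (auto simp: tree_isometries_id tree_isometries_comp)

lemma inv_W:
  assumes "g \<in> carrier W"
  shows "inv\<^bsub>W\<^esub> g = inv_into UNIV g"
proof -
  have "surj g" using assms by (simp add: bij_tree_isometry bij_is_surj)
  with assms show ?thesis
    by (intro group.inv_equality[OF group_W]) (simp_all add: tree_isometries_inv surj_iff)
qed

lemma mem_conj_W_iff:
  assumes "g \<in> carrier W"
  shows "x \<in> g <#\<^bsub>W\<^esub> K #>\<^bsub>W\<^esub> inv\<^bsub>W\<^esub> g \<longleftrightarrow> (\<exists>h\<in>K. g \<circ> x = h \<circ> g)"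
proof -
  have "bij g" using assms by (simp add: bij_tree_isometry)
  then have "x = inv_into UNIV g \<circ> h \<circ> g \<longleftrightarrow> g \<circ> x = h \<circ> g" for h
    by (metis bij_is_inj bij_is_surj inv_o_cancel surj_iff o_assoc id_o)
  then show ?thesis
    using assms by (auto simp: l_coset_def r_coset_def inv_W o_assoc)
qed

lemma aff_in_tree_isometries: "aff a s \<in> tree_isometries"
proof -
  have "aff (if s then a else - a) s \<circ> aff a s = id" "aff a s \<circ> aff (if s then a else - a) s = id"
    by simp_all
  then have "bij (aff a s)" using o_bij by blast
  then show ?thesis using aff_append by (simp add: tree_isometries_def)
qed

lemma tau_in_tree_isometries: "tau \<in> tree_isometries"
  and delta_in_tree_isometries: "delta \<in> tree_isometries"
  by (simp_all add: tau_eq_aff delta_eq_aff aff_in_tree_isometries)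

lemma group_Dinf: "group Dinf"
proof (rule groupI)
  fix x assume "x \<in> carrier Dinf"
  obtain a s where x: "x = (a, s)" by (cases x)
  have "(if s then a else - a, s) \<otimes>\<^bsub>Dinf\<^esub> x = \<one>\<^bsub>Dinf\<^esub>" by (simp add: Dinf_def x)
  then show "\<exists>y\<in>carrier Dinf. y \<otimes>\<^bsub>Dinf\<^esub> x = \<one>\<^bsub>Dinf\<^esub>" by (auto simp: Dinf_def)
qed (auto simp: Dinf_def split: prod.splits)

lemma group_hom_aff: "group_hom Dinf W (case_prod aff)"
proof -
  have "case_prod aff \<in> hom Dinf W"
    by (rule homI) (auto simp: Dinf_def aff_in_tree_isometries)
  then show ?thesis using group_Dinf group_W by (simp add: group_hom_def group_hom_axioms_def)
qed

lemma subgroup_range_aff: "subgroup (range (case_prod aff)) W"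
  using group_hom.img_is_subgroup[OF group_hom_aff] by (simp add: Dinf_def)

lemma generate_tau_delta: "generate W {tau, delta} = range (case_prod aff)"
proof
  interpret W: group W by (rule group_W)
  have tau: "tau = case_prod aff (1, False)" and delta: "delta = case_prod aff (0, True)"
    by (simp_all add: tau_eq_aff delta_eq_aff)
  show "generate W {tau, delta} \<subseteq> range (case_prod aff)"
  proof (rule W.generate_subgroup_incl)
    show "{tau, delta} \<subseteq> range (case_prod aff)" using tau delta by blast
    show "subgroup (range (case_prod aff)) W" by (rule subgroup_range_aff)
  qed
  let ?S = "generate W {tau, delta}"
  have S: "subgroup ?S W"
    by (intro W.generate_is_subgroup) (simp add: tau_in_tree_isometries delta_in_tree_isometries)
  have tau_S: "tau \<in> ?S" and delta_S: "delta \<in> ?S" by (auto intro: generate.incl)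
  have "inv\<^bsub>W\<^esub> tau = aff (-1) False"
    by (rule W.inv_equality) (simp_all add: tau_eq_aff aff_in_tree_isometries)
  then have tau_inv_S: "aff (-1) False \<in> ?S" using subgroup.m_inv_closed[OF S tau_S] by simp
  have translation_S: "aff k False \<in> ?S" for k
  proof (induction k rule: int_induct[where k = 0])
    case base
    show ?case using subgroup.one_closed[OF S] by (simp add: id_def)
  next
    case (step1 i)
    from subgroup.m_closed[OF S step1(2) tau_S] show ?case by (simp add: tau_eq_aff)
  next
    case (step2 i)
    from subgroup.m_closed[OF S step2(2) tau_inv_S] show ?case by simp
  qed
  have reflection_S: "aff k True \<in> ?S" for k
    using subgroup.m_closed[OF S translation_S delta_S] by (simp add: delta_eq_aff)
  show "range (case_prod aff) \<subseteq> ?S"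
  proof clarify
    fix k s show "aff k s \<in> ?S" using translation_S reflection_S by (cases s) simp_all
  qed
qed

lemma aff_iso: "case_prod aff \<in> iso Dinf (W\<lparr>carrier := range (case_prod aff)\<rparr>)"
  by (rule isoI) (auto simp: hom_def Dinf_def bij_betw_def inj_on_def aff_inject)

lemma aff_intertwine_int_mult:
  assumes "aff p False \<circ> f = f \<circ> aff q False"
  shows "aff (k * p) False \<circ> f = f \<circ> aff (k * q) False"
proof (induction k rule: int_induct[where k = 0])
  case (step1 i)
  have "aff ((i + 1) * p) False \<circ> f = aff p False \<circ> (aff (i * p) False \<circ> f)"
    by (simp add: o_assoc algebra_simps)
  also have "\<dots> = (aff p False \<circ> f) \<circ> aff (i * q) False"
    by (simp only: step1(2) o_assoc)
  also have "\<dots> = f \<circ> aff ((i + 1) * q) False"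
    by (simp only: assms o_assoc[symmetric]) (simp add: algebra_simps)
  finally show ?case .
next
  case (step2 i)
  have "aff (- p) False \<circ> f = aff (- p) False \<circ> (f \<circ> aff q False) \<circ> aff (- q) False"
    by (simp add: o_assoc[symmetric])
  also have "\<dots> = f \<circ> aff (- q) False"
    by (simp only: assms[symmetric] o_assoc) simp
  finally have inverse: "aff (- p) False \<circ> f = f \<circ> aff (- q) False" .
  have "aff ((i - 1) * p) False \<circ> f = aff (- p) False \<circ> (aff (i * p) False \<circ> f)"
    by (simp add: o_assoc algebra_simps)
  also have "\<dots> = (aff (- p) False \<circ> f) \<circ> aff (i * q) False"
    by (simp only: step2(2) o_assoc)
  also have "\<dots> = f \<circ> aff ((i - 1) * q) False"
    by (simp only: inverse o_assoc[symmetric]) (simp add: algebra_simps)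
  finally show ?case .
qed simp

lemma tree_isometry_intertwining_translation:
  assumes "g \<in> tree_isometries" and "aff 1 False \<circ> g = g \<circ> aff a False"
  shows "g (word_of_int n (k * a)) = word_of_int n (word_val (g (word_of_int n 0)) + k)"
proof -
  have "g (word_of_int n (k * a)) = (g \<circ> aff (k * a) False) (word_of_int n 0)"
    by (simp add: aff_word_of_int)
  also have "\<dots> = aff k False (g (word_of_int n 0))"
    using fun_cong[OF aff_intertwine_int_mult[OF assms(2), of k]] by simp
  also have "\<dots> = word_of_int n (word_val (g (word_of_int n 0)) + k)"
    by (simp add: aff_def length_tree_isometry[OF assms(1)])
  finally show ?thesis .
qed

lemma tree_isometry_word_of_int_Suc:
  assumes "g \<in> tree_isometries"
  shows "2 ^ n dvd word_val (g (word_of_int (Suc n) k)) - word_val (g (word_of_int n k))"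
proof -
  let ?w = "g (word_of_int (Suc n) k)"
  have "take n ?w = g (word_of_int n k)"
    using take_tree_isometry[OF assms, of "word_of_int n k" "word_of_int 1 (k div 2 ^ n)"]
    by (simp add: word_of_int_add[of n 1, simplified])
  then have "word_val (take n ?w @ drop n ?w)
      = word_val (g (word_of_int n k)) + 2 ^ n * word_val (drop n ?w)"
    using length_tree_isometry[OF assms, of "word_of_int n k"] by (simp add: word_val_append)
  then have "word_val ?w = word_val (g (word_of_int n k)) + 2 ^ n * word_val (drop n ?w)"
    by (simp only: append_take_drop_id)
  then show ?thesis by simp
qed

lemma two_adic_half:
  fixes z :: "nat \<Rightarrow> int"
  assumes coherent: "\<And>n. 2 ^ n dvd z (Suc n) - z n"
    and double: "\<And>n. 2 ^ n dvd 2 * z n - d"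
  shows "\<exists>c. \<forall>n. 2 ^ n dvd z n - c"
proof -
  have "2 dvd d" using double[of 1] by simp
  then obtain c where c: "d = 2 * c" by blast
  have "2 ^ n dvd z n - c" for n
  proof -
    have "2 * 2 ^ n dvd 2 * (z (Suc n) - c)"
      using double[of "Suc n"] unfolding c by (simp only: power_Suc right_diff_distrib)
    then have "2 ^ n dvd z (Suc n) - c"
      by (simp only: dvd_times_left_cancel_iff zero_neq_numeral not_False_eq_True)
    from dvd_diff[OF this coherent[of n]] show ?thesis by simp
  qed
  then show ?thesis by blast
qed

lemma tree_isometry_eq_aff:
  assumes g: "g \<in> tree_isometries" and unit: "a = 1 \<or> a = -1"
    and tau_conj: "aff 1 False \<circ> g = g \<circ> aff a False"
    and delta_conj: "delta \<circ> g = g \<circ> aff b True"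
  shows "g \<in> range (case_prod aff)"
proof -
  define z where "z n = word_val (g (word_of_int n 0))" for n
  have g_word: "g (word_of_int n k) = word_of_int n (z n + a * k)" for n k
  proof -
    have "a * k * a = k" using unit by auto
    with tree_isometry_intertwining_translation[OF g tau_conj, of n "a * k"] show ?thesis
      by (simp only: z_def)
  qed
  have "2 ^ n dvd 2 * z n - (a * (1 + b) - 1)" for n
  proof -
    have "word_of_int n (-1 - z n) = word_of_int n (z n + a * (-1 - b))"
      using fun_cong[OF delta_conj, of "word_of_int n 0"]
      by (simp add: g_word delta_eq_aff aff_word_of_int del: word_of_int.simps)
    then show ?thesis by (simp add: word_of_int_eq_iff algebra_simps dvd_diff_commute)
  qed
  moreover have "2 ^ n dvd z (Suc n) - z n" for n
    unfolding z_def by (rule tree_isometry_word_of_int_Suc[OF g])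
  ultimately obtain c where c: "\<And>n. 2 ^ n dvd z n - c" using two_adic_half by metis
  have g_eq: "g w = word_of_int (length w) (c + a * word_val w)" for w
    using g_word[of "length w" "word_val w"] c[of "length w"] by (simp add: word_of_int_eq_iff)
  from unit have "g = aff c False \<or> g = aff (-1 - c) True"
    by (auto simp: fun_eq_iff g_eq aff_def algebra_simps)
  then show ?thesis by auto
qed

lemma normalizing_tree_isometry_eq_aff:
  assumes g: "g \<in> tree_isometries"
    and tau_conj: "tau \<circ> g = g \<circ> aff a s"
    and tau_conj': "g \<circ> tau = aff a' s' \<circ> g"
    and delta_conj: "delta \<circ> g = g \<circ> aff b t"
  shows "g \<in> range (case_prod aff)"
proof -
  have bij: "bij g" using g by (rule bij_tree_isometry)
  have cancel_right: "f \<circ> g = h \<circ> g \<Longrightarrow> f = h" for f h :: "vertex \<Rightarrow> vertex"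
    using bij by (metis bij_is_surj surj_iff o_assoc o_id)
  have cancel_left: "g \<circ> f = g \<circ> h \<Longrightarrow> f = h" for f h :: "vertex \<Rightarrow> vertex"
    using bij by (metis bij_is_inj inv_o_cancel o_assoc id_o)
  have tau_sq_ne_id: "tau \<circ> tau \<noteq> id" and delta_ne_id: "delta \<noteq> id"
    by (simp_all add: tau_eq_aff delta_eq_aff aff_eq_id_iff)
  have "\<not> s"
  proof
    assume s
    have "tau \<circ> tau \<circ> g = g \<circ> (aff a s \<circ> aff a s)" using tau_conj by (metis o_assoc)
    also have "\<dots> = id \<circ> g" using \<open>s\<close> by simp
    finally show False using tau_sq_ne_id cancel_right by blast
  qed
  have "\<not> s'"
  proof
    assume s'
    have "g \<circ> (tau \<circ> tau) = aff a' s' \<circ> aff a' s' \<circ> g" using tau_conj' by (metis o_assoc)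
    also have "\<dots> = g \<circ> id" using \<open>s'\<close> by simp
    finally show False using tau_sq_ne_id cancel_left by blast
  qed
  have t
  proof (rule ccontr)
    assume "\<not> t"
    have "g \<circ> id = delta \<circ> delta \<circ> g" by (simp add: delta_eq_aff)
    also have "\<dots> = g \<circ> (aff b t \<circ> aff b t)" using delta_conj by (metis o_assoc)
    finally have "aff (b + b) False = id" using \<open>\<not> t\<close> cancel_left by simp
    then have "delta \<circ> g = id \<circ> g" using delta_conj \<open>\<not> t\<close> by (simp add: aff_eq_id_iff)
    then show False using delta_ne_id cancel_right by blast
  qed
  have "aff (a * a') False \<circ> g = g \<circ> aff (a * 1) False"
    using aff_intertwine_int_mult[of a' g 1 a] tau_conj' \<open>\<not> s'\<close> by (simp add: tau_eq_aff)
  also have "\<dots> = aff 1 False \<circ> g" using tau_conj \<open>\<not> s\<close> by (simp add: tau_eq_aff)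
  finally have "aff (a * a') False = aff 1 False" by (rule cancel_right)
  then have "a * a' = 1" by (simp add: aff_inject)
  then have "a = 1 \<or> a = -1" by (auto simp: zmult_eq_1_iff)
  with g show ?thesis
    using tree_isometry_eq_aff tau_conj delta_conj \<open>\<not> s\<close> \<open>t\<close> by (simp add: tau_eq_aff)
qed

lemma normalizer_range_aff: "normalizer W (range (case_prod aff)) = range (case_prod aff)"
proof
  interpret W: group W by (rule group_W)
  let ?H = "range (case_prod aff)"
  note H = subgroup_range_aff
  show "?H \<subseteq> normalizer W ?H"
    using W.subgroup_in_normalizer[OF H] normal_imp_subgroup subgroup.subset by fastforce
  show "normalizer W ?H \<subseteq> ?H"
  proof
    fix g assume "g \<in> normalizer W ?H"
    then have g: "g \<in> carrier W" and conj: "g <#\<^bsub>W\<^esub> ?H #>\<^bsub>W\<^esub> inv\<^bsub>W\<^esub> g = ?H"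
      using subgroup.subset[OF H] by (auto simp: normalizer_def stabilizer_def)
    have tau_H: "tau \<in> ?H" and delta_H: "delta \<in> ?H"
      by (auto simp: tau_eq_aff delta_eq_aff)
    have g_inv: "g \<circ> inv_into UNIV g = id"
      using g by (simp add: bij_tree_isometry bij_is_surj flip: surj_iff)
    have conj_H: "\<exists>h\<in>?H. f \<circ> g = g \<circ> h" if "f \<in> ?H" for f
    proof
      let ?x = "inv_into UNIV g \<circ> f \<circ> g"
      have "g \<circ> ?x = f \<circ> g" using g_inv by (simp add: o_assoc)
      with that have "\<exists>h\<in>?H. g \<circ> ?x = h \<circ> g" by blast
      then show "?x \<in> ?H" using mem_conj_W_iff[OF g, of ?x ?H] conj by blast
      show "f \<circ> g = g \<circ> ?x" using \<open>g \<circ> ?x = f \<circ> g\<close> by simp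
    qed
    obtain a s where tau_conj: "tau \<circ> g = g \<circ> aff a s" using conj_H[OF tau_H] by auto
    obtain b t where delta_conj: "delta \<circ> g = g \<circ> aff b t" using conj_H[OF delta_H] by auto
    obtain a' s' where tau_conj': "g \<circ> tau = aff a' s' \<circ> g"
      using mem_conj_W_iff[OF g, of tau ?H] conj tau_H by auto
    show "g \<in> ?H"
      using normalizing_tree_isometry_eq_aff[OF _ tau_conj tau_conj' delta_conj] g by simp
  qed
qed

theorem theorem4p12:
  defines "H \<equiv> generate W {tau, delta}"
  shows "tau \<in> carrier W \<and> delta \<in> carrier W
    \<and> W\<lparr>carrier := H\<rparr> \<cong> Dinf
    \<and> normalizer W H = H"
proof -
  have H: "H = range (case_prod aff)" unfolding H_def by (rule generate_tau_delta)
  have "Dinf \<cong> W\<lparr>carrier := H\<rparr>" unfolding H using aff_iso by (rule is_isoI)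
  then have "W\<lparr>carrier := H\<rparr> \<cong> Dinf" by (rule group.iso_sym[OF group_Dinf])
  with H show ?thesis
    using tau_in_tree_isometries delta_in_tree_isometries normalizer_range_aff by simp
qed

end
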